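(* $\mathcal{E}_v$ is ground complete for $\simeq$: for all closed monitors $m,n$, if $m\simeq n$ then $\mathcal{E}_v\vdash m=n$.
   Context: Monitors: terms $m,n ::= v \mid a.m \mid m+n \mid x$ over a nonempty action set $\mathit{Act}$ ($a\in\mathit{Act}$) and variables $x$, verdicts $v::=\mathit{end}\mid\mathit{yes}\mid\mathit{no}$; closed monitors contain no variables. Transitions $\xrightarrow{\alpha}$, $\alpha\in\mathit{Act}\cup\{\tau\}$ ($\tau\notin\mathit{Act}$): least relation with $a.m\xrightarrow{a}m$; $m\xrightarrow{\alpha}m'$ implies $m+n\xrightarrow{\alpha}m'$ and $n+m\xrightarrow{\alpha}m'$; $v\xrightarrow{\alpha}v$ for each verdict $v$. Weak transitions: $m\xRightarrow{\varepsilon}m'$ iff $m(\xrightarrow{\tau})^*m'$; $m\xRightarrow{a}m'$ iff $m\xRightarrow{\varepsilon}\xrightarrow{a}\xRightarrow{\varepsilon}m'$; $m\xRightarrow{as'}m'$ ($s'\neq\varepsilon$) iff $m\xRightarrow{a}m_1\xRightarrow{s'}m'$. For closed $m$: $L_a(m)=\{s\in\mathit{Act}^*\mid m\xRightarrow{s}\mathit{yes}\}$, $L_r(m)=\{s\in\mathit{Act}^*\mid m\xRightarrow{s}\mathit{no}\}$; $m\simeq n$ iff $L_a(m)=L_a(n)$ and $L_r(m)=L_r(n)$. $\mathcal{E}\vdash m=n$ denotes derivability by reflexivity, symmetry, transitivity, substitution and congruence for $a.\_$ and $+$. $\mathcal{E}_v$ consists of (A1) $x+y=y+x$; (A2) $x+(y+z)=(x+y)+z$;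 (A3) $x+x=x$; (A4) $x+\mathit{end}=x$; and, for each $a\in\mathit{Act}$, ($E_a$) $a.\mathit{end}=\mathit{end}$; ($Y_a$) $\mathit{yes}=\mathit{yes}+a.\mathit{yes}$; ($N_a$) $\mathit{no}=\mathit{no}+a.\mathit{no}$; ($D_a$) $a.(x+y)=a.x+a.y$. *)

theory Defs
  imports Main
begin

datatype verdict = End | Yes | No

datatype 'a mon = Verd verdict | Pref 'a "'a mon" | Sum "'a mon" "'a mon" | Var nat

datatype 'a lab = Act 'a | Tau

inductive step :: "'a mon \<Rightarrow> 'a lab \<Rightarrow> 'a mon \<Rightarrow> bool" where
  pref: "step (Pref a m) (Act a) m"
| suml: "step m \<alpha> m' \<Longrightarrow> step (Sum m n) \<alpha> m'"
| sumr: "step m \<alpha> m' \<Longrightarrow> step (Sum n m) \<alpha> m'"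
| verd: "step (Verd v) \<alpha> (Verd v)"

definition tau_star :: "'a mon \<Rightarrow> 'a mon \<Rightarrow> bool" where
  "tau_star = (\<lambda>m m'. step m Tau m')\<^sup>*\<^sup>*"

definition weak_act :: "'a mon \<Rightarrow> 'a \<Rightarrow> 'a mon \<Rightarrow> bool" where
  "weak_act m a m' \<longleftrightarrow> (\<exists>m1 m2. tau_star m m1 \<and> step m1 (Act a) m2 \<and> tau_star m2 m')"

fun wtrace :: "'a mon \<Rightarrow> 'a list \<Rightarrow> 'a mon \<Rightarrow> bool" where
  "wtrace m [] m' = tau_star m m'"
| "wtrace m [a] m' = weak_act m a m'"
| "wtrace m (a # b # s) m' = (\<exists>m1. weak_act m a m1 \<and> wtrace m1 (b # s) m')"

fun vars :: "'a mon \<Rightarrow> nat set" where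
  "vars (Verd v) = {}"
| "vars (Pref a m) = vars m"
| "vars (Sum m n) = vars m \<union> vars n"
| "vars (Var x) = {x}"

definition closed :: "'a mon \<Rightarrow> bool" where
  "closed m \<longleftrightarrow> vars m = {}"

definition La :: "'a mon \<Rightarrow> 'a list set" where
  "La m = {s. wtrace m s (Verd Yes)}"

definition Lr :: "'a mon \<Rightarrow> 'a list set" where
  "Lr m = {s. wtrace m s (Verd No)}"

definition mon_equiv :: "'a mon \<Rightarrow> 'a mon \<Rightarrow> bool" where
  "mon_equiv m n \<longleftrightarrow> La m = La n \<and> Lr m = Lr n"

fun subst :: "(nat \<Rightarrow> 'a mon) \<Rightarrow> 'a mon \<Rightarrow> 'a mon" where
  "subst \<sigma> (Verd v) = Verd v"
| "subst \<sigma> (Pref a m) = Pref a (subst \<sigma> m)"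
| "subst \<sigma> (Sum m n) = Sum (subst \<sigma> m) (subst \<sigma> n)"
| "subst \<sigma> (Var x) = \<sigma> x"

inductive derivable :: "('a mon \<times> 'a mon) set \<Rightarrow> 'a mon \<Rightarrow> 'a mon \<Rightarrow> bool" for E where
  ax: "(l, r) \<in> E \<Longrightarrow> derivable E l r"
| refl: "derivable E m m"
| sym: "derivable E m n \<Longrightarrow> derivable E n m"
| trans: "derivable E m n \<Longrightarrow> derivable E n k \<Longrightarrow> derivable E m k"
| subst: "derivable E m n \<Longrightarrow> derivable E (subst \<sigma> m) (subst \<sigma> n)"
| cong_pref: "derivable E m n \<Longrightarrow> derivable E (Pref a m) (Pref a n)"
| cong_sum: "derivable E m1 n1 \<Longrightarrow> derivable E m2 n2 \<Longrightarrow> derivable E (Sum m1 m2) (Sum n1 n2)"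

definition Ev :: "('a mon \<times> 'a mon) set" where
  "Ev = {(Sum (Var 0) (Var 1), Sum (Var 1) (Var 0)),
         (Sum (Var 0) (Sum (Var 1) (Var 2)), Sum (Sum (Var 0) (Var 1)) (Var 2)),
         (Sum (Var 0) (Var 0), Var 0),
         (Sum (Var 0) (Verd End), Var 0)}
      \<union> (\<Union>a. {(Pref a (Verd End), Verd End),
               (Verd Yes, Sum (Verd Yes) (Pref a (Verd Yes))),
               (Verd No, Sum (Verd No) (Pref a (Verd No))),
               (Pref a (Sum (Var 0) (Var 1)), Sum (Pref a (Var 0)) (Pref a (Var 1)))})"

end

theory Submission
  imports Defs
begin

text \<open>
  Write \<open>n \<sqsubseteq> m\<close> when \<open>\<E>\<^sub>v \<turnstile> m + n = m\<close>. Modulo \<open>\<E>\<^sub>v\<close> this is a partial order in which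
  \<open>+\<close> is the join and \<open>end\<close> the bottom, so it suffices to show that inclusion of
  acceptance and rejection languages between closed monitors implies \<open>n \<sqsubseteq> m\<close>. Since
  \<open>\<tau>\<close>-steps only lead to verdicts, this goes by induction on \<open>n\<close>: a verdict \<open>yes\<close> or \<open>no\<close>
  in \<open>n\<close> forces the same verdict as a summand of \<open>m\<close>; for \<open>n = a.k\<close>, the syntactic
  derivative \<open>\<partial>\<^sub>a m\<close> recognises the \<open>a\<close>-quotients of the languages of \<open>m\<close>, so
  \<open>k \<sqsubseteq> \<partial>\<^sub>a m\<close> by induction, and the axioms \<open>E\<^sub>a, Y\<^sub>a, N\<^sub>a, D\<^sub>a\<close> give \<open>a.\<partial>\<^sub>a m \<sqsubseteq> m\<close>.
\<close>

fun has_verdict :: "verdict \<Rightarrow> 'a mon \<Rightarrow> bool" where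
  "has_verdict v (Verd w) = (v = w)"
| "has_verdict v (Pref a k) = False"
| "has_verdict v (Sum k1 k2) = (has_verdict v k1 \<or> has_verdict v k2)"
| "has_verdict v (Var x) = False"

inductive_simps step_Sum_iff: "step (Sum k1 k2) \<alpha> y"
inductive_simps step_Pref_iff: "step (Pref a k) \<alpha> y"
inductive_simps step_Verd_iff: "step (Verd w) \<alpha> y"
inductive_simps step_Var_iff: "step (Var x) \<alpha> y"

lemma step_Tau_iff: "step m Tau y \<longleftrightarrow> (\<exists>w. y = Verd w \<and> has_verdict w m)"
  by (induction m) (auto simp: step_Sum_iff step_Pref_iff step_Verd_iff step_Var_iff)

lemma has_verdict_step: "has_verdict w m \<Longrightarrow> step m \<alpha> (Verd w)"
  by (induction m) (auto intro: step.intros)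

lemma tau_star_iff: "tau_star m x \<longleftrightarrow> x = m \<or> (\<exists>w. x = Verd w \<and> has_verdict w m)"
proof
  assume "tau_star m x"
  then show "x = m \<or> (\<exists>w. x = Verd w \<and> has_verdict w m)"
    unfolding tau_star_def
    by (induction rule: rtranclp_induct) (auto simp: step_Tau_iff)
next
  assume "x = m \<or> (\<exists>w. x = Verd w \<and> has_verdict w m)"
  then show "tau_star m x"
    unfolding tau_star_def by (auto simp: step_Tau_iff)
qed

lemma tau_star_refl: "tau_star m m"
  by (simp add: tau_star_iff)

lemma tau_star_trans: "tau_star m k \<Longrightarrow> tau_star k x \<Longrightarrow> tau_star m x"
  unfolding tau_star_def by simp

text \<open>A leading \<open>\<tau>\<close>-move can only reach a verdict summand, whose own \<open>a\<close>-loop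
  the monitor already offers directly.\<close>
lemma weak_act_iff_step: "weak_act m a x \<longleftrightarrow> (\<exists>k. step m (Act a) k \<and> tau_star k x)"
  unfolding weak_act_def tau_star_iff[of m]
  by (auto simp: step_Verd_iff intro: has_verdict_step)

lemma wtrace_Cons: "wtrace m (a # s) x \<longleftrightarrow> (\<exists>k. weak_act m a k \<and> wtrace k s x)"
proof (cases s)
  case Nil
  have "weak_act m a x \<longleftrightarrow> (\<exists>k. weak_act m a k \<and> tau_star k x)"
    by (auto simp: weak_act_iff_step intro: tau_star_refl tau_star_trans)
  with Nil show ?thesis by simp
qed simp

lemma wtrace_tau_star_left: "tau_star m k \<Longrightarrow> wtrace k s x \<Longrightarrow> wtrace m s x"
  by (cases s) (auto simp: wtrace_Cons weak_act_def intro: tau_star_trans)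

definition verdict_lang :: "verdict \<Rightarrow> 'a mon \<Rightarrow> 'a list set" where
  "verdict_lang v m = {s. wtrace m s (Verd v)}"

lemma La_eq_verdict_lang: "La = verdict_lang Yes"
  and Lr_eq_verdict_lang: "Lr = verdict_lang No"
  by (auto simp: La_def Lr_def verdict_lang_def)

lemma Nil_in_verdict_lang_iff: "[] \<in> verdict_lang v m \<longleftrightarrow> has_verdict v m"
  by (auto simp: verdict_lang_def tau_star_iff)

lemma Cons_in_verdict_lang_iff:
  "a # s \<in> verdict_lang v m \<longleftrightarrow> (\<exists>k. step m (Act a) k \<and> s \<in> verdict_lang v k)"
  by (auto simp: verdict_lang_def wtrace_Cons weak_act_iff_step
      intro: wtrace_tau_star_left tau_star_refl)

lemma verdict_lang_Verd: "verdict_lang v (Verd w) = (if v = w then UNIV else {})"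
proof -
  have "s \<in> verdict_lang v (Verd w) \<longleftrightarrow> v = w" for s
    by (induction s) (simp_all add: Nil_in_verdict_lang_iff Cons_in_verdict_lang_iff step_Verd_iff)
  then show ?thesis by auto
qed

lemma verdict_lang_Pref: "verdict_lang v (Pref a k) = (#) a ` verdict_lang v k"
proof -
  have "s \<in> verdict_lang v (Pref a k) \<longleftrightarrow> s \<in> (#) a ` verdict_lang v k" for s
    by (cases s) (auto simp: Nil_in_verdict_lang_iff Cons_in_verdict_lang_iff step_Pref_iff)
  then show ?thesis by blast
qed

lemma verdict_lang_Sum: "verdict_lang v (Sum k1 k2) = verdict_lang v k1 \<union> verdict_lang v k2"
proof -
  have "s \<in> verdict_lang v (Sum k1 k2) \<longleftrightarrow> s \<in> verdict_lang v k1 \<or> s \<in> verdict_lang v k2" for s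
    by (cases s) (auto simp: Nil_in_verdict_lang_iff Cons_in_verdict_lang_iff step_Sum_iff)
  then show ?thesis by blast
qed

lemma verdict_lang_Var: "verdict_lang v (Var x) = {}"
proof -
  have "s \<notin> verdict_lang v (Var x)" for s
    by (cases s) (auto simp: Nil_in_verdict_lang_iff Cons_in_verdict_lang_iff step_Var_iff)
  then show ?thesis by blast
qed

fun derivative :: "'a \<Rightarrow> 'a mon \<Rightarrow> 'a mon" where
  "derivative a (Verd w) = Verd w"
| "derivative a (Pref b k) = (if a = b then k else Verd End)"
| "derivative a (Sum k1 k2) = Sum (derivative a k1) (derivative a k2)"
| "derivative a (Var x) = Verd End"

lemma verdict_lang_derivative:
  assumes "v \<noteq> End"
  shows "verdict_lang v (derivative a m) = {s. a # s \<in> verdict_lang v m}"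
  using assms
  by (induction m) (simp_all add: verdict_lang_Verd verdict_lang_Pref verdict_lang_Sum
      verdict_lang_Var image_iff Collect_disj_eq)

lemma derivable_Ev_instance: "(l, r) \<in> Ev \<Longrightarrow> derivable Ev (subst \<sigma> l) (subst \<sigma> r)"
  by (intro derivable.subst derivable.ax)

lemma Ev_Sum_commute: "derivable Ev (Sum x y) (Sum y x)"
  using derivable_Ev_instance[of "Sum (Var 0) (Var 1)" "Sum (Var 1) (Var 0)" "(!) [x, y]"]
  by (simp add: Ev_def)

lemma Ev_Sum_assoc: "derivable Ev (Sum x (Sum y z)) (Sum (Sum x y) z)"
  using derivable_Ev_instance[of "Sum (Var 0) (Sum (Var 1) (Var 2))"
      "Sum (Sum (Var 0) (Var 1)) (Var 2)" "(!) [x, y, z]"]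
  by (simp add: Ev_def)

lemma Ev_Sum_idem: "derivable Ev (Sum x x) x"
  using derivable_Ev_instance[of "Sum (Var 0) (Var 0)" "Var 0" "(!) [x]"]
  by (simp add: Ev_def)

lemma Ev_Sum_End: "derivable Ev (Sum x (Verd End)) x"
  using derivable_Ev_instance[of "Sum (Var 0) (Verd End)" "Var 0" "(!) [x]"]
  by (simp add: Ev_def)

lemma Ev_Pref_Sum_distrib: "derivable Ev (Pref a (Sum x y)) (Sum (Pref a x) (Pref a y))"
  using derivable_Ev_instance[of "Pref a (Sum (Var 0) (Var 1))"
      "Sum (Pref a (Var 0)) (Pref a (Var 1))" "(!) [x, y]"]
  by (simp add: Ev_def)

lemma Ev_Pref_End: "derivable Ev (Pref a (Verd End)) (Verd End)"
  and Ev_Yes_loop: "derivable Ev (Verd Yes) (Sum (Verd Yes) (Pref a (Verd Yes)))"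
  and Ev_No_loop: "derivable Ev (Verd No) (Sum (Verd No) (Pref a (Verd No)))"
  by (auto simp: Ev_def intro: derivable.ax)

declare derivable.trans [trans]

definition absorbed :: "'a mon \<Rightarrow> 'a mon \<Rightarrow> bool" where
  "absorbed n m \<longleftrightarrow> derivable Ev (Sum m n) m"

lemma absorbed_refl: "absorbed m m"
  unfolding absorbed_def by (rule Ev_Sum_idem)

lemma absorbed_trans:
  assumes "absorbed k n" and "absorbed n m"
  shows "absorbed k m"
proof -
  have kn: "derivable Ev (Sum n k) n" and nm: "derivable Ev (Sum m n) m"
    using assms by (simp_all add: absorbed_def)
  have "derivable Ev (Sum m k) (Sum (Sum m n) k)"
    by (intro derivable.cong_sum derivable.sym[OF nm] derivable.refl)
  also have "derivable Ev \<dots> (Sum m (Sum n k))"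
    by (rule derivable.sym[OF Ev_Sum_assoc])
  also have "derivable Ev \<dots> (Sum m n)"
    by (intro derivable.cong_sum derivable.refl kn)
  also note nm
  finally show ?thesis unfolding absorbed_def .
qed

lemma absorbed_Sum_left: "absorbed n (Sum n k)"
proof -
  have "derivable Ev (Sum (Sum n k) n) (Sum n (Sum n k))"
    by (rule Ev_Sum_commute)
  also have "derivable Ev \<dots> (Sum (Sum n n) k)"
    by (rule Ev_Sum_assoc)
  also have "derivable Ev \<dots> (Sum n k)"
    by (intro derivable.cong_sum Ev_Sum_idem derivable.refl)
  finally show ?thesis unfolding absorbed_def .
qed

lemma absorbed_Sum_right: "absorbed k (Sum n k)"
proof -
  have "derivable Ev (Sum (Sum n k) k) (Sum n (Sum k k))"
    by (rule derivable.sym[OF Ev_Sum_assoc])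
  also have "derivable Ev \<dots> (Sum n k)"
    by (intro derivable.cong_sum Ev_Sum_idem derivable.refl)
  finally show ?thesis unfolding absorbed_def .
qed

lemma absorbed_SumI:
  assumes "absorbed n1 m" and "absorbed n2 m"
  shows "absorbed (Sum n1 n2) m"
proof -
  have "derivable Ev (Sum m (Sum n1 n2)) (Sum (Sum m n1) n2)"
    by (rule Ev_Sum_assoc)
  also have "derivable Ev \<dots> (Sum m n2)"
    using assms(1) unfolding absorbed_def by (intro derivable.cong_sum derivable.refl)
  also have "derivable Ev \<dots> m"
    using assms(2) unfolding absorbed_def .
  finally show ?thesis unfolding absorbed_def .
qed

lemma absorbed_End: "absorbed (Verd End) m"
  unfolding absorbed_def by (rule Ev_Sum_End)

lemma absorbed_Pref:
  assumes "absorbed n m"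
  shows "absorbed (Pref a n) (Pref a m)"
proof -
  have "derivable Ev (Sum (Pref a m) (Pref a n)) (Pref a (Sum m n))"
    by (rule derivable.sym[OF Ev_Pref_Sum_distrib])
  also have "derivable Ev \<dots> (Pref a m)"
    using assms unfolding absorbed_def by (rule derivable.cong_pref)
  finally show ?thesis unfolding absorbed_def .
qed

lemma absorbed_derivable: "absorbed n m \<Longrightarrow> derivable Ev n n' \<Longrightarrow> absorbed n' m"
  unfolding absorbed_def
  by (metis derivable.cong_sum derivable.refl derivable.sym derivable.trans)

lemma absorbed_antisym: "absorbed n m \<Longrightarrow> absorbed m n \<Longrightarrow> derivable Ev m n"
  unfolding absorbed_def by (metis Ev_Sum_commute derivable.sym derivable.trans)

lemma absorbed_verdict: "has_verdict v m \<Longrightarrow> absorbed (Verd v) m"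
  by (induction m) (auto intro: absorbed_refl absorbed_trans absorbed_Sum_left absorbed_Sum_right)

lemma absorbed_Pref_End: "absorbed (Pref a (Verd End)) m"
  using absorbed_End derivable.sym[OF Ev_Pref_End] by (rule absorbed_derivable)

lemma absorbed_Pref_derivative: "absorbed (Pref a (derivative a m)) m"
proof (induction m)
  case (Verd w)
  then show ?case
    using Ev_Yes_loop[of a] Ev_No_loop[of a] absorbed_Pref_End
    by (cases w) (auto simp: absorbed_def intro: derivable.sym)
next
  case (Sum k1 k2)
  have "absorbed (Sum (Pref a (derivative a k1)) (Pref a (derivative a k2))) (Sum k1 k2)"
    using absorbed_trans[OF Sum.IH(1) absorbed_Sum_left]
      absorbed_trans[OF Sum.IH(2) absorbed_Sum_right]
    by (rule absorbed_SumI)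
  then show ?case
    using absorbed_derivable derivable.sym[OF Ev_Pref_Sum_distrib] by fastforce
qed (simp_all add: absorbed_refl absorbed_Pref_End)

lemma absorbed_if_verdict_lang_subset:
  assumes "closed n"
    and "\<And>v. v \<noteq> End \<Longrightarrow> verdict_lang v n \<subseteq> verdict_lang v m"
  shows "absorbed n m"
  using assms
proof (induction n arbitrary: m)
  case (Verd w)
  show ?case
  proof (cases "w = End")
    case True
    then show ?thesis by (simp add: absorbed_End)
  next
    case False
    then have "[] \<in> verdict_lang w m"
      using Verd.prems(2)[of w] by (auto simp: verdict_lang_Verd)
    then show ?thesis
      by (simp add: Nil_in_verdict_lang_iff absorbed_verdict)
  qed
next
  case (Pref a k)
  have "closed k"
    using Pref.prems(1) by (simp add: closed_def)
  moreover have "verdict_lang v k \<subseteq> verdict_lang v (derivative a m)" if "v \<noteq> End" for v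
    using Pref.prems(2)[OF that] that by (auto simp: verdict_lang_Pref verdict_lang_derivative)
  ultimately have "absorbed k (derivative a m)"
    by (rule Pref.IH)
  then show ?case
    by (rule absorbed_trans[OF absorbed_Pref absorbed_Pref_derivative])
next
  case (Sum k1 k2)
  have "closed k1" and "closed k2"
    using Sum.prems(1) by (simp_all add: closed_def)
  moreover have "verdict_lang v k1 \<subseteq> verdict_lang v m"
    and "verdict_lang v k2 \<subseteq> verdict_lang v m" if "v \<noteq> End" for v
    using Sum.prems(2)[OF that] by (simp_all add: verdict_lang_Sum)
  ultimately show ?case
    using Sum.IH by (blast intro: absorbed_SumI)
next
  case (Var x)
  then show ?case by (simp add: closed_def)
qed

theorem mainTheorem7:
  fixes m n :: "'a mon"
  assumes "closed m" and "closed n" and "mon_equiv m n"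
  shows "derivable Ev m n"
proof -
  have same_lang: "verdict_lang v m = verdict_lang v n" if "v \<noteq> End" for v
    using assms(3) that
    by (cases v) (simp_all add: mon_equiv_def La_eq_verdict_lang Lr_eq_verdict_lang)
  have "absorbed m n" and "absorbed n m"
    using assms(1,2) same_lang by (simp_all add: absorbed_if_verdict_lang_subset)
  then show ?thesis
    using absorbed_antisym by blast
qed

end
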